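(* Let $\mu$ be a centrally symmetric Borel probability measure on the unit sphere $S^2\subset\mathbb R^3$ (i.e. $\mu(-E)=\mu(E)$ for Borel $E$). For $\mathbf n_0\in\mathbb R^3$ with $|\mathbf n_0|\le1$, $\lambda\in[-1,1]$ and a Borel function $g:S^2\to[0,1]$, define $$x_0(\lambda,\mathbf n_0,g)=\int\big[1_{\mathbf n_0^T\mathbf n>\lambda}(\mathbf n)+g(\mathbf n)1_{\mathbf n_0^T\mathbf n=\lambda}(\mathbf n)\big]\,d\mu(\mathbf n),\qquad \mathbf b(\lambda,\mathbf n_0,g)=\int\big[1_{\mathbf n_0^T\mathbf n>\lambda}(\mathbf n)+g(\mathbf n)1_{\mathbf n_0^T\mathbf n=\lambda}(\mathbf n)\big]\,\mathbf n\,d\mu(\mathbf n).$$ If $x_0(\lambda,\mathbf n_0,g)=\tfrac12$, then $\mathbf b(0,\mathbf n_0,g)=\mathbf b(\lambda,\mathbf n_0,g)$.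
   Context: $1_X$ denotes the indicator function of a set $X\subseteq S^2$. (In the paper, the points $(x_0,\mathbf b)$ parametrize the boundary of the box generated by the ansatz $\mu$, and $x_0=\tfrac12$ is the cross-section relevant for T-states.) *)

theory Defs
  imports "HOL-Probability.Probability"
begin

definition box_weight :: "real \<Rightarrow> real^3 \<Rightarrow> (real^3 \<Rightarrow> real) \<Rightarrow> real^3 \<Rightarrow> real" where
  "box_weight lam n0 g n =
     indicator {m. n0 \<bullet> m > lam} n + g n * indicator {m. n0 \<bullet> m = lam} n"

definition box_x0 :: "(real^3) measure \<Rightarrow> real \<Rightarrow> real^3 \<Rightarrow> (real^3 \<Rightarrow> real) \<Rightarrow> real" where
  "box_x0 \<mu> lam n0 g = (\<integral>n. box_weight lam n0 g n \<partial>\<mu>)"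

definition box_b :: "(real^3) measure \<Rightarrow> real \<Rightarrow> real^3 \<Rightarrow> (real^3 \<Rightarrow> real) \<Rightarrow> real^3" where
  "box_b \<mu> lam n0 g = (\<integral>n. box_weight lam n0 g n *\<^sub>R n \<partial>\<mu>)"

end

theory Submission imports Defs begin

text \<open>Central symmetry makes the open half-spaces \<open>n\<^sub>0 \<bullet> n > 0\<close> and \<open>n\<^sub>0 \<bullet> n < 0\<close> equally
  likely, so \<open>2 \<mu>(P) + \<mu>(Z) = 1\<close> for \<open>P\<close> the positive half-space and \<open>Z\<close> the hyperplane.
  For \<open>\<lambda> > 0\<close> the weight lies below \<open>1\<^sub>P\<close>, so \<open>1/2 = x\<^sub>0 \<le> \<mu>(P) \<le> 1/2\<close>; equality forces
  \<open>\<mu>(Z) = 0\<close> and the weight to coincide with \<open>1\<^sub>P\<close> almost everywhere. For \<open>\<lambda> < 0\<close> the same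
  argument applies to the complementary weight \<open>1 - w\<close> and the direction \<open>-n\<^sub>0\<close>. Since \<open>Z\<close> is null, the weight at \<open>\<lambda> = 0\<close> is
  \<open>1\<^sub>P\<close> almost everywhere as well, hence both weights give the same vector integral.\<close>

lemma measure_inner_pos_eq_neg_of_symmetric:
  fixes M :: "'a::real_inner measure"
  assumes symm: "\<forall>E \<in> sets M. emeasure M (uminus ` E) = emeasure M E"
    and space_neg: "\<And>x. x \<in> space M \<Longrightarrow> -x \<in> space M"
    and [measurable]: "(\<lambda>x. a \<bullet> x) \<in> borel_measurable M"
  shows "measure M {x \<in> space M. 0 < a \<bullet> x} = measure M {x \<in> space M. a \<bullet> x < 0}"
proof -
  let ?P = "{x \<in> space M. 0 < a \<bullet> x}"
  have "uminus ` ?P = {x \<in> space M. a \<bullet> x < 0}"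
  proof
    show "uminus ` ?P \<subseteq> {x \<in> space M. a \<bullet> x < 0}"
      using space_neg by auto
    show "{x \<in> space M. a \<bullet> x < 0} \<subseteq> uminus ` ?P"
    proof
      fix x assume "x \<in> {x \<in> space M. a \<bullet> x < 0}"
      then have "-x \<in> ?P" using space_neg by auto
      then show "x \<in> uminus ` ?P" by (rule rev_image_eqI) simp
    qed
  qed
  moreover have "?P \<in> sets M" by measurable
  ultimately show ?thesis
    using symm by (metis measure_def)
qed

lemma AE_eq_indicator_pos_of_integral_half:
  fixes t w :: "'a \<Rightarrow> real"
  assumes "prob_space M"
    and [measurable]: "t \<in> borel_measurable M"
    and balanced: "measure M {x \<in> space M. 0 < t x} = measure M {x \<in> space M. t x < 0}"
    and w: "integrable M w"
    and le: "\<And>x. x \<in> space M \<Longrightarrow> w x \<le> indicator {x \<in> space M. 0 < t x} x"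
    and half: "integral\<^sup>L M w = 1/2"
  shows "AE x in M. w x = indicator {x \<in> space M. 0 < t x} x"
    and "AE x in M. t x \<noteq> 0"
proof -
  interpret prob_space M by fact
  define P where "P = {x \<in> space M. 0 < t x}"
  define Z where "Z = {x \<in> space M. t x = 0}"
  define N where "N = {x \<in> space M. t x < 0}"
  have [measurable]: "P \<in> sets M" "Z \<in> sets M" "N \<in> sets M"
    unfolding P_def Z_def N_def by measurable
  have "space M = P \<union> Z \<union> N"
    unfolding P_def Z_def N_def by auto
  then have "measure M (P \<union> Z \<union> N) = 1"
    by (metis prob_space)
  moreover have "measure M (P \<union> Z \<union> N) = measure M P + measure M Z + measure M N"
    by (subst finite_measure_Union; (subst finite_measure_Union)?) (auto simp: P_def Z_def N_def)
  ultimately have "measure M P + measure M Z + measure M N = 1"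
    by simp
  then have partition: "2 * measure M P + measure M Z = 1"
    using balanced unfolding P_def N_def by simp
  have P_int: "integrable M (indicator P :: 'a \<Rightarrow> real)"
    by (simp add: integrable_indicator_iff emeasure_eq_measure)
  have "1/2 \<le> measure M P"
    using integral_mono[OF w P_int] le half by (simp add: P_def)
  then have Z_zero: "measure M Z = 0" and P_half: "measure M P = 1/2"
    using partition measure_nonneg[of M Z] by linarith+
  show "AE x in M. w x = indicator {x \<in> space M. 0 < t x} x"
    using integral_eq_mono_AE_eq_AE[OF w P_int] half P_half le
    by (simp add: P_def)
  have "Z \<in> null_sets M"
    using Z_zero by (simp add: emeasure_eq_measure null_setsI)
  from AE_not_in[OF this] AE_space show "AE x in M. t x \<noteq> 0"
    by eventually_elim (simp add: Z_def)
qed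

lemma AE_eq_indicator_pos_of_sandwich:
  fixes t w :: "'a \<Rightarrow> real"
  assumes "prob_space M"
    and [measurable]: "t \<in> borel_measurable M"
    and balanced: "measure M {x \<in> space M. 0 < t x} = measure M {x \<in> space M. t x < 0}"
    and w: "integrable M w"
    and "l \<noteq> 0"
    and lower: "\<And>x. x \<in> space M \<Longrightarrow> indicator {x. l < t x} x \<le> w x"
    and upper: "\<And>x. x \<in> space M \<Longrightarrow> w x \<le> indicator {x. l \<le> t x} x"
    and half: "integral\<^sup>L M w = 1/2"
  shows "AE x in M. w x = indicator {x \<in> space M. 0 < t x} x"
    and "AE x in M. t x \<noteq> 0"
proof -
  interpret prob_space M by fact
  have "(AE x in M. w x = indicator {x \<in> space M. 0 < t x} x) \<and> (AE x in M. t x \<noteq> 0)"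
  proof (cases "0 < l")
    case True
    have "w x \<le> indicator {x \<in> space M. 0 < t x} x" if "x \<in> space M" for x
      using upper[OF that] True that by (cases "l \<le> t x") (auto simp: indicator_def)
    then show ?thesis
      using AE_eq_indicator_pos_of_integral_half[OF \<open>prob_space M\<close> _ balanced w _ half] by simp
  next
    case False
    with \<open>l \<noteq> 0\<close> have "l < 0" by simp
    have "1 - w x \<le> indicator {x \<in> space M. 0 < - t x} x" if "x \<in> space M" for x
      using lower[OF that] \<open>l < 0\<close> that by (cases "l < t x") (auto simp: indicator_def)
    moreover have "integral\<^sup>L M (\<lambda>x. 1 - w x) = 1/2"
      using w half by (simp add: prob_space)
    ultimately have "AE x in M. 1 - w x = indicator {x \<in> space M. 0 < - t x} x"
      and t_nonzero: "AE x in M. - t x \<noteq> 0"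
      using AE_eq_indicator_pos_of_integral_half[of M "\<lambda>x. - t x" "\<lambda>x. 1 - w x"]
        \<open>prob_space M\<close> balanced w by auto
    then have "AE x in M. w x = indicator {x \<in> space M. 0 < t x} x"
      using AE_space by eventually_elim (auto simp: indicator_def split: if_splits)
    with t_nonzero show ?thesis by simp
  qed
  then show "AE x in M. w x = indicator {x \<in> space M. 0 < t x} x"
    and "AE x in M. t x \<noteq> 0" by auto
qed

lemma box_weight_bounds:
  assumes "0 \<le> g n" "g n \<le> 1"
  shows "indicator {m. lam < n0 \<bullet> m} n \<le> box_weight lam n0 g n"
    and "box_weight lam n0 g n \<le> indicator {m. lam \<le> n0 \<bullet> m} n"
  using assms by (auto simp: box_weight_def indicator_def)

lemma box_weight_zero_off_hyperplane:
  "n0 \<bullet> n \<noteq> 0 \<Longrightarrow> box_weight 0 n0 g n = indicator {m. 0 < n0 \<bullet> m} n"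
  by (simp add: box_weight_def indicator_def)

theorem lemma3:
  fixes \<mu> :: "(real^3) measure" and n0 :: "real^3" and lam :: real
    and g :: "real^3 \<Rightarrow> real"
  assumes prob: "prob_space \<mu>"
    and space: "space \<mu> = sphere 0 1"
    and sets: "sets \<mu> = sets (restrict_space borel (sphere (0::real^3) 1))"
    and symm: "\<forall>E \<in> sets \<mu>. emeasure \<mu> (uminus ` E) = emeasure \<mu> E"
    and n0: "norm n0 \<le> 1"
    and lam: "-1 \<le> lam" "lam \<le> 1"
    and g_meas: "g \<in> borel_measurable \<mu>"
    and g_range: "\<forall>n \<in> space \<mu>. 0 \<le> g n \<and> g n \<le> 1"
    and half: "box_x0 \<mu> lam n0 g = 1/2"
  shows "box_b \<mu> 0 n0 g = box_b \<mu> lam n0 g"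
proof (cases "lam = 0")
  case False
  interpret prob_space \<mu> by (rule prob)
  note g_meas[measurable]
  have [measurable]: "(\<lambda>n. n0 \<bullet> n) \<in> borel_measurable \<mu>" "(\<lambda>n. n) \<in> borel_measurable \<mu>"
    by (subst measurable_cong_sets[OF sets refl],
        intro measurable_restrict_space1 borel_measurable_continuous_onI continuous_intros)+
  have [measurable]: "box_weight l n0 g \<in> borel_measurable \<mu>" for l
    unfolding box_weight_def by measurable
  have "integrable \<mu> (box_weight lam n0 g)"
    using g_range by (intro integrable_const_bound[where B=1] AE_I2) (auto simp: box_weight_def indicator_def)
  moreover have "measure \<mu> {n \<in> space \<mu>. 0 < n0 \<bullet> n} = measure \<mu> {n \<in> space \<mu>. n0 \<bullet> n < 0}"
    by (rule measure_inner_pos_eq_neg_of_symmetric[OF symm]) (auto simp: space)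
  ultimately have "AE n in \<mu>. box_weight lam n0 g n = indicator {n \<in> space \<mu>. 0 < n0 \<bullet> n} n"
    and "AE n in \<mu>. n0 \<bullet> n \<noteq> 0"
    using AE_eq_indicator_pos_of_sandwich[OF prob, of "\<lambda>n. n0 \<bullet> n" "box_weight lam n0 g" lam]
      box_weight_bounds g_range half False by (auto simp: box_x0_def)
  then have "AE n in \<mu>. box_weight 0 n0 g n *\<^sub>R n = box_weight lam n0 g n *\<^sub>R n"
    using AE_space by eventually_elim (simp add: box_weight_zero_off_hyperplane indicator_def)
  then show ?thesis
    unfolding box_b_def by (intro integral_cong_AE) simp_all
qed simp

end
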